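(* Let $f\in\mathbb{Z}_2[x]$, $n\ge1$, and let $\sigma$ be a growing $k$-cycle of $f_n$. Then its (unique) lift either strongly grows or strongly splits.
   Context: $f_n$ is the induced map on $\mathbb{Z}/2^n\mathbb{Z}$, $f_n(x\bmod 2^n)=f(x)\bmod 2^n$. A $k$-cycle of $f_n$ is a tuple $\sigma=(x_1,\dots,x_k)$ of distinct elements with $f_n(x_i)=x_{i+1}$, $f_n(x_k)=x_1$; $\sigma$ grows if $\{y\in\mathbb{Z}/2^{n+1}\mathbb{Z}:y\bmod 2^n\in\sigma\}$ is a single cycle of $f_{n+1}$ (of length $2k$), called its lift. For a cycle of length $\ell$ at level $m$ and a representative $x\in\mathbb{Z}_2$ of one of its points, $a_m=(f^\ell)'(x)$ and $b_m=(f^\ell(x)-x)/2^m$; the cycle strongly grows if $a_m\equiv1\pmod4$ and $b_m$ is odd, and strongly splits if $a_m\equiv1\pmod4$ and $b_m$ is even. *)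

theory Defs
  imports "HOL-Computational_Algebra.Polynomial"
begin

text \<open>A 2-adic integer is represented by its compatible sequence of residues
  modulo 2^n (the inverse limit of the rings Z/2^nZ).\<close>

typedef padic2 = "{s :: nat \<Rightarrow> int. \<forall>n. s n \<in> {0..<2^n} \<and> (\<forall>m\<ge>n. s m mod 2^n = s n)}"
  morphisms digits Abs_padic2
  by (rule exI[of _ "\<lambda>_. 0"]) auto

setup_lifting type_definition_padic2

lemma padic2_compat_op:
  fixes a b :: "nat \<Rightarrow> int"
  assumes "\<forall>m\<ge>n. a m mod 2^n = a n" "\<forall>m\<ge>n. b m mod 2^n = b n" "m \<ge> n"
    and op: "op = (+) \<or> op = (*) \<or> op = (-)"
  shows "(op (a m) (b m) mod 2^m) mod 2^n = op (a n) (b n) mod 2^n"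
proof -
  have d: "(2::int)^n dvd 2^m" using \<open>m \<ge> n\<close> by (simp add: le_imp_power_dvd)
  have "(op (a m) (b m) mod 2^m) mod 2^n = op (a m) (b m) mod 2^n"
    using d by (simp add: mod_mod_cancel)
  also have "\<dots> = op (a m mod 2^n) (b m mod 2^n) mod 2^n"
    using op by (auto simp: mod_add_eq mod_mult_eq mod_diff_eq)
  also have "\<dots> = op (a n) (b n) mod 2^n" using assms by simp
  finally show ?thesis .
qed

lemma padic2_compat_uminus:
  fixes a :: "nat \<Rightarrow> int"
  assumes "\<forall>m\<ge>n. a m mod 2^n = a n" "m \<ge> n"
  shows "((- a m) mod 2^m) mod 2^n = (- a n) mod 2^n"
  using padic2_compat_op[of n "\<lambda>_. 0" a m "(-)"] assms by simp

instantiation padic2 :: comm_ring_1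
begin

lift_definition zero_padic2 :: padic2 is "\<lambda>_. 0" by auto
lift_definition one_padic2 :: padic2 is "\<lambda>n. 1 mod 2^n"
  by (auto simp: mod_mod_cancel le_imp_power_dvd)
lift_definition plus_padic2 :: "padic2 \<Rightarrow> padic2 \<Rightarrow> padic2"
  is "\<lambda>a b n. (a n + b n) mod 2^n"
  using padic2_compat_op by auto
lift_definition times_padic2 :: "padic2 \<Rightarrow> padic2 \<Rightarrow> padic2"
  is "\<lambda>a b n. (a n * b n) mod 2^n"
  using padic2_compat_op by auto
lift_definition minus_padic2 :: "padic2 \<Rightarrow> padic2 \<Rightarrow> padic2"
  is "\<lambda>a b n. (a n - b n) mod 2^n"
  using padic2_compat_op by auto
lift_definition uminus_padic2 :: "padic2 \<Rightarrow> padic2"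
  is "\<lambda>a n. (- a n) mod 2^n"
  using padic2_compat_uminus by auto

instance
proof
  fix a b c :: padic2
  show "a * b * c = a * (b * c)"
    by transfer (auto simp: mod_mult_left_eq mod_mult_right_eq mult.assoc)
  show "a * b = b * a" by transfer (simp add: mult.commute)
  show "1 * a = a"
  proof transfer
    fix a :: "nat \<Rightarrow> int"
    assume A: "\<forall>n. a n \<in> {0..<2^n} \<and> (\<forall>m\<ge>n. a m mod 2^n = a n)"
    show "(\<lambda>n. 1 mod 2^n * a n mod 2^n) = a"
    proof
      fix n show "1 mod 2^n * a n mod 2^n = a n"
      proof (cases n)
        case (Suc k)
        have "(1::int) < 2 * 2^k"
          using one_le_power[of "2::int" k] by linarith
        then show ?thesis using A[rule_format, of n] Suc by (simp add: mod_pos_pos_trivial)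
      next
        case 0
        then show ?thesis using A[rule_format, of 0] by simp
      qed
    qed
  qed
  show "a + b + c = a + (b + c)"
    by transfer (auto simp: mod_add_left_eq mod_add_right_eq add.assoc)
  show "a + b = b + a" by transfer (simp add: add.commute)
  show "0 + a = a" by transfer auto
  show "- a + a = 0" by transfer (auto simp: mod_add_left_eq)
  show "a - b = a + - b" by transfer (auto simp: mod_add_right_eq)
  show "(a + b) * c = a * c + b * c"
    by transfer (auto simp: mod_mult_left_eq mod_add_eq distrib_right)
  show "(0::padic2) \<noteq> 1"
  proof
    assume "(0::padic2) = 1"
    then have "digits 0 1 = digits 1 1" by simp
    then show False by transfer simp
  qed
qed

end

text \<open>Elements of Z/2^nZ are represented by their least nonnegative residues,
  i.e. by the integers in {0..<2^n}.\<close>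

definition red :: "nat \<Rightarrow> padic2 \<Rightarrow> int" where
  "red n x = digits x n"

definition fmod :: "padic2 poly \<Rightarrow> nat \<Rightarrow> int \<Rightarrow> int" where
  "fmod f n r = red n (poly f (of_int r))"

definition is_cycle :: "padic2 poly \<Rightarrow> nat \<Rightarrow> nat \<Rightarrow> int list \<Rightarrow> bool" where
  "is_cycle f n k xs \<longleftrightarrow> length xs = k \<and> k \<ge> 1 \<and> distinct xs \<and>
     set xs \<subseteq> {0..<2^n} \<and>
     (\<forall>i<k. fmod f n (xs ! i) = xs ! ((i + 1) mod k))"

definition lift_set :: "nat \<Rightarrow> int list \<Rightarrow> int set" where
  "lift_set n xs = {y \<in> {0..<2^(n+1)}. y mod 2^n \<in> set xs}"

definition is_lift :: "padic2 poly \<Rightarrow> nat \<Rightarrow> int list \<Rightarrow> int list \<Rightarrow> bool" where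
  "is_lift f n xs ys \<longleftrightarrow> is_cycle f (n+1) (2 * length xs) ys \<and> set ys = lift_set n xs"

definition grows :: "padic2 poly \<Rightarrow> nat \<Rightarrow> int list \<Rightarrow> bool" where
  "grows f n xs \<longleftrightarrow> (\<exists>ys. is_lift f n xs ys)"

definition poly_iter :: "'a::comm_semiring_1 poly \<Rightarrow> nat \<Rightarrow> 'a poly" where
  "poly_iter f l = ((\<lambda>q. pcompose f q) ^^ l) [:0, 1:]"

text \<open>Formal derivative of a polynomial over a commutative ring
  (the library's pderiv requires a ring without zero divisors).\<close>
definition fderiv :: "'a::comm_semiring_1 poly \<Rightarrow> 'a poly" where
  "fderiv p = (\<Sum>i<degree p. monom (of_nat (Suc i) * coeff p (Suc i)) i)"

definition a_coef :: "padic2 poly \<Rightarrow> nat \<Rightarrow> padic2 \<Rightarrow> padic2" where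
  "a_coef f l x = poly (fderiv (poly_iter f l)) x"

definition b_coef :: "padic2 poly \<Rightarrow> nat \<Rightarrow> nat \<Rightarrow> padic2 \<Rightarrow> padic2" where
  "b_coef f m l x = (THE b. 2^m * b = poly (poly_iter f l) x - x)"

text \<open>A cycle ys of length l at level m strongly grows / strongly splits.
  The quantities are evaluated at every representative x in Z_2 of every point
  of the cycle (they do not depend on this choice).\<close>
definition strongly_grows :: "padic2 poly \<Rightarrow> nat \<Rightarrow> int list \<Rightarrow> bool" where
  "strongly_grows f m ys \<longleftrightarrow> (\<forall>x. red m x \<in> set ys \<longrightarrow>
      red 2 (a_coef f (length ys) x) = 1 \<and> red 1 (b_coef f m (length ys) x) = 1)"

definition strongly_splits :: "padic2 poly \<Rightarrow> nat \<Rightarrow> int list \<Rightarrow> bool" where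
  "strongly_splits f m ys \<longleftrightarrow> (\<forall>x. red m x \<in> set ys \<longrightarrow>
      red 2 (a_coef f (length ys) x) = 1 \<and> red 1 (b_coef f m (length ys) x) = 0)"

end

theory Submission
  imports Defs
begin

text \<open>Let m = n + 1 and let x represent a point of the lift. The multiplier
  a = (f^(2k))'(x) is the product of f' along the orbit of x. First, f' is odd at every
  point of the lift: otherwise f_m would identify y and y + 2^n, which both lie on the
  lifted cycle. Second, the orbit splits into two halves that agree modulo 2^n, and
  f'(y + h) - f'(y) lies in the ideal (2h, h^2), so the two half-products P and Q agree
  modulo 2^m; hence a = P Q is congruent to P^2, i.e. to 1, modulo 4.
  For b, a first-order Taylor expansion shows that 2^m b changes by a multiple of
  2^(m+1) when x is moved within its class modulo 2^m (as a is odd) and when x is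
  replaced by f(x) (as f' is odd). Hence the parity of b is the same at every point of
  the cycle, and the lift strongly grows or strongly splits according to this parity.\<close>

lemma red_range: "red n x \<in> {0..<2^n}"
  using digits[of x] by (simp add: red_def)

lemma red_compat: "j \<le> m \<Longrightarrow> red m x mod 2^j = red j x"
  using digits[of x] by (simp add: red_def)

lemma red_add: "red n (x + y) = (red n x + red n y) mod 2^n"
  by (simp add: red_def plus_padic2.rep_eq)

lemma red_mult: "red n (x * y) = (red n x * red n y) mod 2^n"
  by (simp add: red_def times_padic2.rep_eq)

lemma red_diff: "red n (x - y) = (red n x - red n y) mod 2^n"
  by (simp add: red_def minus_padic2.rep_eq)

lemma red_zero: "red n 0 = 0"
  by (simp add: red_def zero_padic2.rep_eq)

lemma red_one: "red n 1 = 1 mod 2^n"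
  by (simp add: red_def one_padic2.rep_eq)

lemma red_eqI: "(\<And>n. red n x = red n y) \<Longrightarrow> x = y"
  by (metis digits_inject ext red_def)

lemma red_of_nat: "red n (of_nat j) = int j mod 2^n"
proof (induction j)
  case 0
  then show ?case by (simp add: red_zero)
next
  case (Suc j)
  have "red n (of_nat (Suc j)) = (red n 1 + red n (of_nat j)) mod 2^n"
    by (simp add: red_add)
  also have "\<dots> = (1 mod 2^n + int j mod 2^n) mod 2^n"
    by (simp only: red_one Suc.IH)
  also have "\<dots> = (1 + int j) mod 2^n"
    by (rule mod_add_eq)
  finally show ?case by simp
qed

lemma red_of_int: "red n (of_int r) = r mod 2^n"
proof (cases r rule: int_cases)
  case (nonneg j)
  then show ?thesis by (simp add: red_of_nat)
next
  case (neg j)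
  then have "of_int r = (0::padic2) - of_nat (Suc j)"
    by simp
  then have "red n (of_int r) = (red n 0 - red n (of_nat (Suc j))) mod 2^n"
    by (simp only: red_diff)
  also have "\<dots> = (0 - int (Suc j) mod 2^n) mod 2^n"
    by (simp only: red_zero red_of_nat)
  also have "\<dots> = (0 - int (Suc j)) mod 2^n"
    by (rule mod_diff_right_eq)
  finally show ?thesis using neg by simp
qed

lemma red_mult_pow2: "red (j + m) ((2::padic2)^m * b) = 2^m * red j b"
proof -
  have "red (j + m) (2^m * b) = (2^m * red (j + m) b) mod (2^m * 2^j)"
    using red_of_int[of "j + m" "2^m"]
    by (simp add: red_mult mod_mult_left_eq power_add mult.commute)
  also have "\<dots> = 2^m * red j b"
    by (simp add: mod_mult_mult1 red_compat)
  finally show ?thesis .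
qed

lemma pow2_mult_cancel:
  assumes "(2::padic2)^m * b = 2^m * b'"
  shows "b = b'"
proof (rule red_eqI)
  fix j
  from assms have "(2::int)^m * red j b = 2^m * red j b'"
    by (metis red_mult_pow2)
  then show "red j b = red j b'" by simp
qed

lemma pow2_dvd_of_red_eq_0:
  assumes x0: "red m x = 0"
  shows "(2::padic2)^m dvd x"
proof -
  \<comment> \<open>the digits of the quotient are read off the digits of x shifted by m places\<close>
  define q where "q = (\<lambda>n. red (n + m) x div 2^m)"
  have low: "red (n + m) x mod 2^m = 0" for n
    using red_compat[of m "n + m" x] x0 by simp
  have shift: "red (n + m) x = 2^m * q n" for n
    using div_mult_mod_eq[of "red (n + m) x" "2^m"] low[of n] by (simp add: q_def mult.commute)
  have "q \<in> {s. \<forall>n. s n \<in> {0..<2^n} \<and> (\<forall>m\<ge>n. s m mod 2^n = s n)}"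
  proof (intro CollectI allI conjI impI)
    fix n
    have "2^m * q n < 2^m * 2^n"
      using red_range[of "n + m" x] shift[of n] by (simp add: power_add mult.commute)
    moreover have "0 \<le> 2^m * q n"
      using red_range[of "n + m" x] shift[of n] by simp
    ultimately show "q n \<in> {0..<2^n}"
      by (simp add: zero_le_mult_iff)
  next
    fix n m' :: nat
    assume "n \<le> m'"
    have "2^m * (q m' mod 2^n) = red (m' + m) x mod (2^m * 2^n)"
      by (simp add: shift mod_mult_mult1)
    also have "\<dots> = 2^m * q n"
      using red_compat[of "n + m" "m' + m" x] \<open>n \<le> m'\<close>
      by (simp add: shift power_add mult.commute)
    finally show "q m' mod 2^n = q n" by simp
  qed
  then have red_q: "red n (Abs_padic2 q) = q n" for n
    by (simp add: red_def Abs_padic2_inverse)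
  have "x = 2^m * Abs_padic2 q"
  proof (rule red_eqI)
    fix n
    have "red n (2^m * Abs_padic2 q) = (2^m * q n) mod 2^n"
      using red_of_int[of n "2^m"] by (simp add: red_mult red_q mod_mult_left_eq)
    also have "\<dots> = red n x"
      by (simp add: red_compat flip: shift)
    finally show "red n x = red n (2^m * Abs_padic2 q)" by simp
  qed
  then show ?thesis
    by (rule dvdI)
qed

lemma pow2_dvd_iff_red: "(2::padic2)^m dvd x \<longleftrightarrow> red m x = 0"
proof
  assume "2^m dvd x"
  then obtain q where "x = 2^m * q" by (auto elim: dvdE)
  then show "red m x = 0"
    using red_mult_pow2[of 0 m q] red_range[of 0 q] by simp
qed (rule pow2_dvd_of_red_eq_0)

lemma red_eq_iff_pow2_dvd: "red m x = red m y \<longleftrightarrow> (2::padic2)^m dvd x - y"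
proof -
  have "(2::padic2)^m dvd x - y \<longleftrightarrow> (red m x - red m y) mod 2^m = 0"
    by (simp add: pow2_dvd_iff_red red_diff)
  also have "\<dots> \<longleftrightarrow> red m x mod 2^m = red m y mod 2^m"
    by (simp add: mod_eq_dvd_iff dvd_eq_mod_eq_0)
  also have "\<dots> \<longleftrightarrow> red m x = red m y"
    using red_range[of m x] red_range[of m y] by simp
  finally show ?thesis by simp
qed

lemma padic2_even_or_odd: "2 dvd x \<or> 2 dvd x - (1::padic2)"
proof -
  have "red 1 x = 0 \<or> red 1 x = red 1 1"
    using red_range[of 1 x] by (auto simp: red_one)
  then show ?thesis
    using pow2_dvd_iff_red[of 1 x] red_eq_iff_pow2_dvd[of 1 x 1] by auto
qed

lemma pow2_Suc_dvd_mult_cancel: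
  assumes "(2::padic2)^(m + 1) dvd 2^m * z"
  shows "2 dvd z"
proof -
  obtain w where "2^m * z = 2^(m + 1) * w"
    using assms by (auto elim: dvdE)
  then have "2^m * z = 2^m * (2 * w)"
    by (simp add: mult_ac)
  then have "z = 2 * w"
    by (rule pow2_mult_cancel)
  then show ?thesis
    by simp
qed

section \<open>Formal derivatives and first-order Taylor expansion\<close>

lemma coeff_fderiv: "coeff (fderiv p) n = of_nat (Suc n) * coeff p (Suc n)"
proof -
  have "coeff (fderiv p) n
      = (\<Sum>i<degree p. if i = n then of_nat (Suc i) * coeff p (Suc i) else 0)"
    by (simp add: fderiv_def coeff_sum coeff_monom)
  also have "\<dots> = of_nat (Suc n) * coeff p (Suc n)"
    by (auto simp: coeff_eq_0)
  finally show ?thesis .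
qed

lemma fderiv_0 [simp]: "fderiv 0 = 0"
  by (rule poly_eqI) (simp add: coeff_fderiv)

lemma fderiv_pCons: "fderiv (pCons a p) = p + pCons 0 (fderiv p)"
  by (rule poly_eqI) (auto simp: coeff_fderiv coeff_pCons algebra_simps split: nat.split)

lemma fderiv_add: "fderiv (p + q) = fderiv p + fderiv q"
  by (rule poly_eqI) (simp add: coeff_fderiv algebra_simps)

lemma fderiv_smult: "fderiv (smult a p) = smult a (fderiv p)"
  by (rule poly_eqI) (simp add: coeff_fderiv algebra_simps)

lemma fderiv_mult: "fderiv (p * q) = p * fderiv q + q * fderiv p"
  by (induct p) (auto simp: fderiv_add fderiv_smult fderiv_pCons algebra_simps)

lemma fderiv_pcompose: "fderiv (pcompose p q) = pcompose (fderiv p) q * fderiv q"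
  by (induction p rule: pCons_induct)
     (auto simp: pcompose_pCons fderiv_add fderiv_mult fderiv_pCons pcompose_add algebra_simps)

lemma fderiv_pX: "fderiv [:0, 1:] = (1 :: 'a::comm_semiring_1 poly)"
  by (rule poly_eqI) (auto simp: coeff_fderiv coeff_pCons split: nat.split)

lemma poly_iter_Suc: "poly_iter f (Suc l) = pcompose f (poly_iter f l)"
  by (simp add: poly_iter_def)

lemma poly_poly_iter: "poly (poly_iter f l) x = (poly f ^^ l) x"
  by (induction l) (simp_all add: poly_iter_def poly_pcompose)

lemma poly_fderiv_poly_iter:
  "poly (fderiv (poly_iter f l)) x = (\<Prod>i<l. poly (fderiv f) ((poly f ^^ i) x))"
  for f :: "'a::comm_ring_1 poly"
proof (induction l)
  case 0
  then show ?case by (simp add: poly_iter_def fderiv_pX)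
next
  case (Suc l)
  then show ?case
    by (simp add: poly_iter_Suc fderiv_pcompose poly_pcompose poly_poly_iter mult.commute)
qed

lemma poly_taylor_dvd:
  fixes p :: "'a::comm_ring_1 poly"
  shows "h^2 dvd poly p (y + h) - poly p y - h * poly (fderiv p) y"
proof (induction p rule: pCons_induct)
  case (pCons a q)
  let ?T = "poly q (y + h) - poly q y - h * poly (fderiv q) y"
  have "poly (pCons a q) (y + h) - poly (pCons a q) y - h * poly (fderiv (pCons a q)) y
      = (y + h) * ?T + h^2 * poly (fderiv q) y"
    by (simp add: fderiv_pCons algebra_simps power2_eq_square)
  then show ?case
    using pCons.IH by simp
qed simp

lemma poly_fderiv_diff_dvd:
  fixes p :: "'a::comm_ring_1 poly"
  assumes "d dvd 2 * h" "d dvd h^2"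
  shows "d dvd poly (fderiv p) (y + h) - poly (fderiv p) y"
proof (induction p rule: pCons_induct)
  case (pCons a q)
  have expand: "poly (fderiv (pCons a q)) (y + h) - poly (fderiv (pCons a q)) y
      = (poly q (y + h) - poly q y - h * poly (fderiv q) y) + 2 * h * poly (fderiv q) y
        + (y + h) * (poly (fderiv q) (y + h) - poly (fderiv q) y)"
    by (simp add: fderiv_pCons algebra_simps)
  have "d dvd poly q (y + h) - poly q y - h * poly (fderiv q) y"
    using assms(2) poly_taylor_dvd dvd_trans by blast
  then show ?case
    unfolding expand using pCons.IH assms(1) by (intro dvd_add) simp_all
qed simp

lemma poly_diff_dvd: "x - y dvd poly p x - poly p y"
  for p :: "'a::comm_ring_1 poly"
proof (induction p rule: pCons_induct)
  case (pCons a q)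
  have "poly (pCons a q) x - poly (pCons a q) y = (x - y) * poly q x + y * (poly q x - poly q y)"
    by (simp add: algebra_simps)
  then show ?case
    using pCons.IH by simp
qed simp

lemma red_poly_cong: "red m y = red m y' \<Longrightarrow> red m (poly p y) = red m (poly p y')"
  using poly_diff_dvd dvd_trans red_eq_iff_pow2_dvd by metis

lemma pow2_Suc_dvd_square:
  assumes "1 \<le> m" "(2::padic2)^m dvd h"
  shows "2^(m + 1) dvd h^2"
proof -
  have "(2::padic2)^(m + 1) dvd (2^m)^2"
    using assms(1) le_imp_power_dvd[of "m + 1" "m * 2" "2::padic2"] by (simp add: power_mult)
  also have "(2^m)^2 dvd h^2"
    using assms(2) by (rule dvd_power_same)
  finally show ?thesis .
qed

lemma pow2_taylor_dvd:
  assumes "1 \<le> m" "(2::padic2)^m dvd h"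
  shows "2^(m + 1) dvd poly p (x + h) - poly p x - h * poly (fderiv p) x"
  using pow2_Suc_dvd_square[OF assms] poly_taylor_dvd dvd_trans by blast

lemma pow2_shift_dvd_of_odd_fderiv:
  assumes "1 \<le> m" "(2::padic2)^m dvd h" "2 dvd poly (fderiv p) x - 1"
  shows "2^(m + 1) dvd poly p (x + h) - poly p x - h"
proof -
  have "2^(m + 1) dvd h * (poly (fderiv p) x - 1)"
    using mult_dvd_mono[OF assms(2,3)] by (simp add: mult.commute)
  then have "2^(m + 1) dvd (poly p (x + h) - poly p x - h * poly (fderiv p) x)
      + h * (poly (fderiv p) x - 1)"
    using pow2_taylor_dvd[OF assms(1,2)] by (rule dvd_add[rotated])
  then show ?thesis
    by (simp add: algebra_simps)
qed

lemma red_poly_fderiv_cong: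
  assumes "1 \<le> n" "red n y = red n y'"
  shows "red (n + 1) (poly (fderiv p) y) = red (n + 1) (poly (fderiv p) y')"
proof -
  have h: "(2::padic2)^n dvd y - y'"
    using assms(2) red_eq_iff_pow2_dvd by blast
  have "2^(n + 1) dvd 2 * (y - y')"
    using mult_dvd_mono[OF dvd_refl h, of 2] by (simp add: mult.commute)
  then have "2^(n + 1) dvd poly (fderiv p) (y' + (y - y')) - poly (fderiv p) y'"
    using pow2_Suc_dvd_square[OF assms(1) h] by (rule poly_fderiv_diff_dvd)
  then show ?thesis
    using red_eq_iff_pow2_dvd by simp
qed

lemma red_funpow_cong:
  "red m y = red m y' \<Longrightarrow> red m ((poly f ^^ i) y) = red m ((poly f ^^ i) y')"
  by (induction i) (auto intro: red_poly_cong)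

lemma is_cycle_memE:
  assumes "is_cycle f m l xs" "red m y \<in> set xs"
  obtains j where "j < l" "red m y = xs ! j"
  using assms unfolding is_cycle_def by (metis in_set_conv_nth)

lemma is_cycle_step:
  assumes "is_cycle f m l xs" "j < l" "red m y = xs ! j"
  shows "red m (poly f y) = xs ! ((j + 1) mod l)"
proof -
  have "xs ! j \<in> {0..<2^m}"
    using assms(1,2) unfolding is_cycle_def by (auto dest: nth_mem)
  then have "red m (of_int (xs ! j)) = red m y"
    using assms(3) by (simp add: red_of_int)
  then have "red m (poly f y) = fmod f m (xs ! j)"
    unfolding fmod_def by (metis red_poly_cong)
  then show ?thesis
    using assms(1,2) unfolding is_cycle_def by simp
qed

lemma is_cycle_iter:
  assumes "is_cycle f m l xs" "j < l" "red m y = xs ! j"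
  shows "red m ((poly f ^^ i) y) = xs ! ((j + i) mod l)"
proof (induction i)
  case 0
  then show ?case using assms by simp
next
  case (Suc i)
  have "0 < l" using assms(2) by simp
  then have "red m ((poly f ^^ Suc i) y) = xs ! (((j + i) mod l + 1) mod l)"
    using is_cycle_step[OF assms(1) _ Suc.IH] by simp
  then show ?case
    by (simp add: mod_Suc_eq)
qed

lemma is_cycle_iter_mem:
  assumes "is_cycle f m l xs" "red m y \<in> set xs"
  shows "red m ((poly f ^^ i) y) \<in> set xs"
proof -
  obtain j where j: "j < l" "red m y = xs ! j"
    using assms by (rule is_cycle_memE)
  then have "(j + i) mod l < length xs"
    using assms(1) unfolding is_cycle_def by simp
  then show ?thesis
    using is_cycle_iter[OF assms(1) j] by simp
qed

lemma is_cycle_period: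
  assumes "is_cycle f m l xs" "red m y \<in> set xs"
  shows "red m ((poly f ^^ l) y) = red m y"
proof -
  obtain j where "j < l" "red m y = xs ! j"
    using assms by (rule is_cycle_memE)
  then show ?thesis
    using is_cycle_iter[OF assms(1), of j y l] by simp
qed

lemma is_cycle_reach:
  assumes "is_cycle f m l xs" "red m x \<in> set xs" "red m x' \<in> set xs"
  obtains i where "red m ((poly f ^^ i) x) = red m x'"
proof -
  obtain j where j: "j < l" "red m x = xs ! j"
    using assms(1,2) by (rule is_cycle_memE)
  obtain j' where j': "j' < l" "red m x' = xs ! j'"
    using assms(1,3) by (rule is_cycle_memE)
  have "(j + (j' + l - j)) mod l = j'"
    using j(1) j'(1) by simp
  then show ?thesis
    using that is_cycle_iter[OF assms(1) j, of "j' + l - j"] j' by simp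
qed

text \<open>Injectivity of f_m on a cycle needs no distinctness: f_m^(l-1) inverts it.\<close>

lemma is_cycle_inj:
  assumes "is_cycle f m l xs" "red m y \<in> set xs" "red m y' \<in> set xs"
    and "red m (poly f y) = red m (poly f y')"
  shows "red m y = red m y'"
proof -
  have "0 < l"
    using assms(1) unfolding is_cycle_def by simp
  then have iter: "(poly f ^^ l) z = (poly f ^^ (l - 1)) (poly f z)" for z
    using funpow_Suc_right[of "l - 1" "poly f"] by simp
  have "red m y = red m ((poly f ^^ (l - 1)) (poly f y))"
    using is_cycle_period[OF assms(1,2)] by (simp add: iter)
  also have "\<dots> = red m ((poly f ^^ (l - 1)) (poly f y'))"
    using assms(4) by (rule red_funpow_cong)
  also have "\<dots> = red m y'"
    using is_cycle_period[OF assms(1,3)] by (simp add: iter)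
  finally show ?thesis .
qed

lemma is_lift_mem_iff:
  assumes "is_lift f n \<sigma> \<tau>"
  shows "red (n + 1) y \<in> set \<tau> \<longleftrightarrow> red n y \<in> set \<sigma>"
  using assms red_range[of "n + 1" y] red_compat[of n "n + 1" y]
  by (simp add: is_lift_def lift_set_def)

text \<open>If f'(y) were even, y and y + 2^n would be distinct points of the lift
  with the same image under f_(n+1).\<close>

lemma is_lift_fderiv_odd:
  assumes "1 \<le> n" "is_lift f n \<sigma> \<tau>" "red (n + 1) y \<in> set \<tau>"
  shows "2 dvd poly (fderiv f) y - 1"
proof (rule ccontr)
  assume "\<not> ?thesis"
  then have even: "2 dvd poly (fderiv f) y"
    using padic2_even_or_odd by blast
  define y' where "y' = y + 2^n"
  have "red n y' = red n y"
    by (simp add: y'_def red_eq_iff_pow2_dvd)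
  then have y'_mem: "red (n + 1) y' \<in> set \<tau>"
    using assms(3) is_lift_mem_iff[OF assms(2), of y] is_lift_mem_iff[OF assms(2), of y'] by simp
  have "2^(n + 1) dvd 2^n * poly (fderiv f) y"
    using mult_dvd_mono[OF dvd_refl[of "(2::padic2)^n"] even] by (simp add: mult.commute)
  then have "2^(n + 1) dvd (poly f y' - poly f y - 2^n * poly (fderiv f) y)
      + 2^n * poly (fderiv f) y"
    unfolding y'_def by (rule dvd_add[OF pow2_taylor_dvd[OF assms(1) dvd_refl]])
  then have "red (n + 1) (poly f y') = red (n + 1) (poly f y)"
    by (simp add: red_eq_iff_pow2_dvd)
  then have "red (n + 1) y' = red (n + 1) y"
    using assms(2) y'_mem assms(3) is_cycle_inj unfolding is_lift_def by blast
  then have "(2::padic2)^(n + 1) dvd 2^n"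
    by (simp add: y'_def red_eq_iff_pow2_dvd)
  then have "red (n + 1) ((2::padic2)^n) = 0"
    by (simp only: pow2_dvd_iff_red)
  then show False
    using red_of_int[of "n + 1" "2^n"] by simp
qed

section \<open>The multiplier a\<close>

lemma a_coef_eq_prod: "a_coef f l x = (\<Prod>i<l. poly (fderiv f) ((poly f ^^ i) x))"
  by (simp add: a_coef_def poly_fderiv_poly_iter)

lemma prod_lessThan_add: "(\<Prod>i<a + b. g i) = (\<Prod>i<a. g i) * (\<Prod>i<b. g (a + i))"
  for b :: nat
  by (induction b) (simp_all add: mult.assoc)

lemma a_coef_add: "a_coef f (i + j) x = a_coef f i x * a_coef f j ((poly f ^^ i) x)"
proof -
  have "(poly f ^^ (i + j')) x = (poly f ^^ j') ((poly f ^^ i) x)" for j'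
    unfolding add.commute[of i j'] funpow_add by simp
  then show ?thesis
    by (simp add: a_coef_eq_prod prod_lessThan_add)
qed

lemma prod_diff_dvd:
  fixes u v :: "nat \<Rightarrow> 'a::comm_ring_1"
  assumes "\<And>i. i < k \<Longrightarrow> d dvd u i - v i"
  shows "d dvd (\<Prod>i<k. u i) - (\<Prod>i<k. v i)"
  using assms
proof (induction k)
  case (Suc k)
  have "(\<Prod>i<Suc k. u i) - (\<Prod>i<Suc k. v i)
      = ((\<Prod>i<k. u i) - (\<Prod>i<k. v i)) * u k + (\<Prod>i<k. v i) * (u k - v k)"
    by (simp add: algebra_simps)
  then show ?case
    using Suc by simp
qed simp

lemma red_a_coef_cong:
  assumes "1 \<le> n" "red n y = red n y'"
  shows "red (n + 1) (a_coef f l y) = red (n + 1) (a_coef f l y')"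
proof -
  have "red (n + 1) (poly (fderiv f) ((poly f ^^ i) y))
      = red (n + 1) (poly (fderiv f) ((poly f ^^ i) y'))" for i
    using assms(1) red_funpow_cong[OF assms(2)] by (rule red_poly_fderiv_cong)
  then show ?thesis
    unfolding a_coef_eq_prod red_eq_iff_pow2_dvd by (intro prod_diff_dvd) simp
qed

lemma cycle_a_coef_odd:
  assumes "is_cycle f m l xs" "\<And>y. red m y \<in> set xs \<Longrightarrow> 2 dvd poly (fderiv f) y - 1"
    and "red m x \<in> set xs"
  shows "2 dvd a_coef f i x - 1"
  using prod_diff_dvd[of i 2 "\<lambda>j. poly (fderiv f) ((poly f ^^ j) x)" "\<lambda>_. 1"]
    assms is_cycle_iter_mem
  by (simp add: a_coef_eq_prod)

lemma odd_mult_cong_dvd: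
  fixes P Q :: "'a::comm_ring_1"
  assumes "2 dvd P - 1" "4 dvd Q - P"
  shows "4 dvd P * Q - 1"
proof -
  obtain e d where "P = 1 + 2 * e" "Q = P + 4 * d"
    using assms by (metis dvdE diff_add_cancel add.commute)
  then have "P * Q - 1 = 4 * (e + e * e + P * d)"
    by (simp add: algebra_simps)
  then show ?thesis
    by simp
qed

text \<open>The multiplier of the lift is the product of the multipliers of the two
  halves of the lifted cycle; these agree modulo 2^(n+1), and are odd.\<close>

lemma lift_a_coef_cong_one:
  assumes "1 \<le> n" "is_cycle f n k \<sigma>" "is_lift f n \<sigma> \<tau>" "red (n + 1) x \<in> set \<tau>"
  shows "red 2 (a_coef f (2 * k) x) = 1"
proof -
  have "length \<sigma> = k"
    using assms(2) by (simp add: is_cycle_def)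
  then have cyc: "is_cycle f (n + 1) (2 * k) \<tau>"
    using assms(3) by (simp add: is_lift_def)
  have "red n ((poly f ^^ k) x) = red n x"
    using is_cycle_period assms(2) assms(4) is_lift_mem_iff[OF assms(3)] by blast
  then have "2^(n + 1) dvd a_coef f k ((poly f ^^ k) x) - a_coef f k x"
    using red_a_coef_cong[OF assms(1)] red_eq_iff_pow2_dvd by blast
  moreover have "(4::padic2) dvd 2^(n + 1)"
    using assms(1) le_imp_power_dvd[of 2 "n + 1" "2::padic2"] by simp
  ultimately have "4 dvd a_coef f k ((poly f ^^ k) x) - a_coef f k x"
    by (rule dvd_trans[rotated])
  moreover have "2 dvd a_coef f k x - 1"
    using cycle_a_coef_odd[OF cyc _ assms(4)] is_lift_fderiv_odd[OF assms(1,3)] by blast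
  ultimately have "4 dvd a_coef f (k + k) x - 1"
    by (simp add: a_coef_add odd_mult_cong_dvd)
  then show ?thesis
    using red_eq_iff_pow2_dvd[of 2 _ 1] by (simp add: mult_2 red_one)
qed

section \<open>The parity of b\<close>

lemma b_coef_eq:
  assumes "(2::padic2)^m dvd poly (poly_iter f l) x - x"
  shows "2^m * b_coef f m l x = poly (poly_iter f l) x - x"
proof -
  obtain q where q: "poly (poly_iter f l) x - x = 2^m * q"
    using assms by (auto elim: dvdE)
  have "(THE b. 2^m * b = poly (poly_iter f l) x - x) = q"
    using q pow2_mult_cancel by (intro the_equality) auto
  then show ?thesis
    using q by (simp add: b_coef_def)
qed

lemma b_coef_parity_cong:
  fixes f :: "padic2 poly" and l :: nat
  defines "g \<equiv> poly (poly_iter f l)"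
  assumes "(2::padic2)^m dvd g x - x" "2^(m + 1) dvd (g x' - x') - (g x - x)"
  shows "red 1 (b_coef f m l x') = red 1 (b_coef f m l x)"
proof -
  have "2^m dvd (g x' - x') - (g x - x)"
    using assms(3) by (rule dvd_trans[rotated]) (simp add: le_imp_power_dvd)
  then have "2^m dvd g x' - x'"
    using assms(2) dvd_add by fastforce
  then have "2^m * (b_coef f m l x' - b_coef f m l x) = (g x' - x') - (g x - x)"
    using b_coef_eq assms(2) by (simp add: g_def right_diff_distrib)
  then have "2 dvd b_coef f m l x' - b_coef f m l x"
    using assms(3) pow2_Suc_dvd_mult_cancel by metis
  then show ?thesis
    by (simp add: red_eq_iff_pow2_dvd)
qed

lemma b_coef_parity_shift:
  assumes "1 \<le> m" "(2::padic2)^m dvd poly (poly_iter f l) x - x"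
    and "red m x' = red m x" "2 dvd a_coef f l x - 1"
  shows "red 1 (b_coef f m l x') = red 1 (b_coef f m l x)"
proof (rule b_coef_parity_cong[OF assms(2)])
  have "2^m dvd x' - x"
    using assms(3) red_eq_iff_pow2_dvd by blast
  then have "2^(m + 1) dvd poly (poly_iter f l) (x + (x' - x)) - poly (poly_iter f l) x - (x' - x)"
    using assms(1,4) by (intro pow2_shift_dvd_of_odd_fderiv) (simp_all add: a_coef_def)
  then show "2^(m + 1) dvd (poly (poly_iter f l) x' - x') - (poly (poly_iter f l) x - x)"
    by (simp add: algebra_simps)
qed

text \<open>With h = f^l(x) - x one has f^l(f(x)) - f(x) = f(x + h) - f(x).\<close>

lemma b_coef_parity_step:
  assumes "1 \<le> m" "(2::padic2)^m dvd poly (poly_iter f l) x - x"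
    and "2 dvd poly (fderiv f) x - 1"
  shows "red 1 (b_coef f m l (poly f x)) = red 1 (b_coef f m l x)"
proof (rule b_coef_parity_cong[OF assms(2)])
  let ?h = "poly (poly_iter f l) x - x"
  have "poly (poly_iter f l) (poly f x) = poly f (x + ?h)"
    by (simp add: poly_poly_iter funpow_swap1)
  moreover have "2^(m + 1) dvd poly f (x + ?h) - poly f x - ?h"
    using assms by (rule pow2_shift_dvd_of_odd_fderiv)
  ultimately show "2^(m + 1) dvd (poly (poly_iter f l) (poly f x) - poly f x) - ?h"
    by (simp add: algebra_simps)
qed

lemma cycle_b_coef_parity:
  assumes "1 \<le> m" "is_cycle f m l xs"
    and odd: "\<And>y. red m y \<in> set xs \<Longrightarrow> 2 dvd poly (fderiv f) y - 1"
    and "red m x \<in> set xs" "red m x' \<in> set xs"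
  shows "red 1 (b_coef f m l x') = red 1 (b_coef f m l x)"
proof -
  have periodic: "(2::padic2)^m dvd poly (poly_iter f l) y - y" if "red m y \<in> set xs" for y
    using is_cycle_period[OF assms(2) that] by (simp add: poly_poly_iter red_eq_iff_pow2_dvd)
  have orbit: "red 1 (b_coef f m l ((poly f ^^ i) x)) = red 1 (b_coef f m l x)" for i
  proof (induction i)
    case (Suc i)
    have "red m ((poly f ^^ i) x) \<in> set xs"
      using assms(2,4) by (rule is_cycle_iter_mem)
    then show ?case
      using Suc b_coef_parity_step[OF assms(1) periodic odd] by simp
  qed simp
  obtain i where i: "red m ((poly f ^^ i) x) = red m x'"
    using assms(2,4,5) by (rule is_cycle_reach)
  have "red m ((poly f ^^ i) x) \<in> set xs"
    using assms(2,4) by (rule is_cycle_iter_mem)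
  then have "red 1 (b_coef f m l x') = red 1 (b_coef f m l ((poly f ^^ i) x))"
    using b_coef_parity_shift[OF assms(1) periodic i[symmetric]]
      cycle_a_coef_odd[OF assms(2) odd] by blast
  then show ?thesis
    using orbit by simp
qed

theorem lemma3p8:
  fixes f :: "padic2 poly" and n k :: nat and \<sigma> \<tau> :: "int list"
  assumes "n \<ge> 1"
    and "is_cycle f n k \<sigma>"
    and "grows f n \<sigma>"
    and "is_lift f n \<sigma> \<tau>"
  shows "strongly_grows f (n + 1) \<tau> \<or> strongly_splits f (n + 1) \<tau>"
  \<comment> \<open>the hypothesis \<open>grows f n \<sigma>\<close> is implied by \<open>is_lift f n \<sigma> \<tau>\<close> and not needed\<close>
proof -
  have "length \<sigma> = k"
    using assms(2) by (simp add: is_cycle_def)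
  then have cyc: "is_cycle f (n + 1) (2 * k) \<tau>"
    using assms(4) by (simp add: is_lift_def)
  then have len: "length \<tau> = 2 * k"
    by (simp add: is_cycle_def)
  have a: "red 2 (a_coef f (length \<tau>) x) = 1" if "red (n + 1) x \<in> set \<tau>" for x
    using lift_a_coef_cong_one[OF assms(1,2,4) that] len by simp
  have b: "red 1 (b_coef f (n + 1) (length \<tau>) x') = red 1 (b_coef f (n + 1) (length \<tau>) x)"
    if "red (n + 1) x \<in> set \<tau>" "red (n + 1) x' \<in> set \<tau>" for x x'
    using cycle_b_coef_parity[OF _ cyc is_lift_fderiv_odd[OF assms(1,4)] that] len by simp
  have "red 1 z = 0 \<or> red 1 z = 1" for z
    using red_range[of 1 z] by auto
  then show ?thesis
    unfolding strongly_grows_def strongly_splits_def using a b by metis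
qed

end
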